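(* Let $\rho\in\mathcal{D}(\mathbb{C}^m\otimes\mathbb{C}^n)$ be a separable state. Then for any $w,y\in[m]$ and $x,z\in[n]$, $$|\langle wx|\rho|yz\rangle|\le\sqrt{\min\big(\langle wx|\rho|wx\rangle,\langle wz|\rho|wz\rangle,\langle yx|\rho|yx\rangle,\langle yz|\rho|yz\rangle\big)},$$ and moreover $$|\langle wx|\rho|yz\rangle|\le\tfrac12\min\big(\langle wx|\rho|wx\rangle+\langle yz|\rho|yz\rangle,\ \langle wz|\rho|wz\rangle+\langle yx|\rho|yx\rangle\big).$$
   Context: $\mathcal{D}(\mathcal{H})$ denotes the set of density matrices on $\mathcal{H}$; $|wx\rangle=|w\rangle\otimes|x\rangle$ denotes computational basis vectors. A state is separable if it is a convex combination of product states $M\otimes N$ with $M,N$ density matrices. *)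

theory Defs
  imports "HOL-Analysis.Analysis"
begin

text \<open>Matrices on a finite-dimensional Hilbert space with computational basis indexed
  by a finite type 'a: complex ^ 'a ^ 'a, entry A $ i $ j = <i|A|j>.\<close>

definition density_matrix :: "complex ^ 'a::finite ^ 'a \<Rightarrow> bool" where
  "density_matrix A \<longleftrightarrow>
     (\<forall>i j. A $ i $ j = cnj (A $ j $ i)) \<and>
     (\<forall>v :: complex ^ 'a. 0 \<le> Re (\<Sum>i\<in>UNIV. \<Sum>j\<in>UNIV. cnj (v $ i) * A $ i $ j * v $ j)) \<and>
     (\<Sum>i\<in>UNIV. A $ i $ i) = 1"

text \<open>Kronecker (tensor) product; basis of C^m (x) C^n indexed by pairs (w,x) = |wx>.\<close>
definition kron :: "complex ^ 'a::finite ^ 'a \<Rightarrow> complex ^ 'b::finite ^ 'b \<Rightarrow> complex ^ ('a \<times> 'b) ^ ('a \<times> 'b)" where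
  "kron M N = (\<chi> p q. M $ fst p $ fst q * N $ snd p $ snd q)"

definition separable :: "complex ^ ('a::finite \<times> 'b::finite) ^ ('a \<times> 'b) \<Rightarrow> bool" where
  "separable \<rho> \<longleftrightarrow>
     (\<exists>(k::nat) (p::nat \<Rightarrow> real) (M::nat \<Rightarrow> complex ^ 'a ^ 'a) (N::nat \<Rightarrow> complex ^ 'b ^ 'b).
        (\<forall>i<k. 0 \<le> p i \<and> density_matrix (M i) \<and> density_matrix (N i)) \<and>
        (\<Sum>i<k. p i) = 1 \<and>
        \<rho> = (\<Sum>i<k. p i *\<^sub>R kron (M i) (N i)))"

end

theory Submission
  imports Defs
begin

(* Positivity of the 2x2 principal minor of rho on the rows wx, yz gives
   |rho(wx,yz)|^2 <= rho(wx,wx) rho(yz,yz).  For a separable rho = sum_i p_i M_i (x) N_i the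
   minor bound for the factors gives |rho(wx,yz)| <= sum_i p_i sqrt(M_i(w,w) N_i(z,z)) sqrt(M_i(y,y) N_i(x,x)),
   and Cauchy-Schwarz turns this into the crossed bound |rho(wx,yz)|^2 <= rho(wz,wz) rho(yx,yx).
   Diagonal entries lie in [0,1], so each product is at most either factor, and AM-GM gives
   the arithmetic-mean bounds. *)

lemma quadratic_nonneg_imp_discriminant_le:
  fixes a b c :: real
  assumes "0 \<le> a" and nonneg: "\<And>t. 0 \<le> a * t\<^sup>2 - 2 * c * t + b"
  shows "c\<^sup>2 \<le> a * b"
proof (cases "a = 0")
  case True
  have "c = 0"
  proof (rule ccontr)
    assume "c \<noteq> 0"
    then show False
      using nonneg[of "(b + 1) / (2 * c)"] True by simp
  qed
  then show ?thesis
    using True by simp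
next
  case False
  with \<open>0 \<le> a\<close> have "0 < a" by simp
  have "0 \<le> a * (c / a)\<^sup>2 - 2 * c * (c / a) + b"
    by (rule nonneg)
  also have "\<dots> = (a * b - c\<^sup>2) / a"
    using \<open>0 < a\<close> by (simp add: field_simps power2_eq_square)
  finally show ?thesis
    using \<open>0 < a\<close> by (simp add: zero_le_divide_iff)
qed

lemma norm_sum_power2_le_sum_mult:
  fixes f :: "'i \<Rightarrow> 'a::real_normed_vector"
  assumes "\<And>i. i \<in> I \<Longrightarrow> (norm (f i))\<^sup>2 \<le> a i * b i"
    and "\<And>i. i \<in> I \<Longrightarrow> 0 \<le> a i" and "\<And>i. i \<in> I \<Longrightarrow> 0 \<le> b i"
  shows "(norm (sum f I))\<^sup>2 \<le> sum a I * sum b I"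
proof -
  have "norm (sum f I) \<le> (\<Sum>i\<in>I. norm (f i))"
    by (rule norm_sum)
  also have "\<dots> \<le> (\<Sum>i\<in>I. sqrt (a i) * sqrt (b i))"
    using assms by (intro sum_mono) (simp add: real_le_rsqrt flip: real_sqrt_mult)
  finally have "(norm (sum f I))\<^sup>2 \<le> (\<Sum>i\<in>I. sqrt (a i) * sqrt (b i))\<^sup>2"
    by (rule power_mono) simp
  also have "\<dots> \<le> (\<Sum>i\<in>I. (sqrt (a i))\<^sup>2) * (\<Sum>i\<in>I. (sqrt (b i))\<^sup>2)"
    by (rule Cauchy_Schwarz_ineq_sum)
  also have "\<dots> = sum a I * sum b I"
    using assms by simp
  finally show ?thesis .
qed

lemma power2_le_min_of_le_mult:
  fixes a b c :: real
  assumes "c\<^sup>2 \<le> a * b" "0 \<le> a" "a \<le> 1" "0 \<le> b" "b \<le> 1"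
  shows "c\<^sup>2 \<le> min a b"
  using assms mult_left_le[of b a] mult_left_le_one_le[of b a] by simp

lemma le_arith_mean_of_power2_le_mult:
  fixes a b c :: real
  assumes "c\<^sup>2 \<le> a * b" "0 \<le> a" "0 \<le> b"
  shows "c \<le> (a + b) / 2"
proof -
  have "c \<le> sqrt (a * b)"
    using assms(1) by (rule real_le_rsqrt)
  also have "\<dots> \<le> (a + b) / 2"
    using assms(2,3) by (rule arith_geo_mean_sqrt)
  finally show ?thesis .
qed

lemma quadratic_form_restrict_support:
  fixes M :: "complex ^ 'a::finite ^ 'a"
  assumes "\<And>k. k \<notin> S \<Longrightarrow> v $ k = 0"
  shows "(\<Sum>k\<in>UNIV. \<Sum>l\<in>UNIV. cnj (v $ k) * M $ k $ l * v $ l)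
       = (\<Sum>k\<in>S. \<Sum>l\<in>S. cnj (v $ k) * M $ k $ l * v $ l)"
proof -
  have "(\<Sum>k\<in>UNIV. \<Sum>l\<in>UNIV. cnj (v $ k) * M $ k $ l * v $ l)
      = (\<Sum>k\<in>UNIV. \<Sum>l\<in>S. cnj (v $ k) * M $ k $ l * v $ l)"
    by (rule sum.cong[OF refl], rule sum.mono_neutral_right) (use assms in auto)
  also have "\<dots> = (\<Sum>k\<in>S. \<Sum>l\<in>S. cnj (v $ k) * M $ k $ l * v $ l)"
    using assms by (intro sum.mono_neutral_right) auto
  finally show ?thesis .
qed

lemma density_matrix_hermitian: "density_matrix M \<Longrightarrow> M $ i $ j = cnj (M $ j $ i)"
  unfolding density_matrix_def by blast

lemma density_matrix_quadratic_form_nonneg: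
  "density_matrix M \<Longrightarrow> 0 \<le> Re (\<Sum>i\<in>UNIV. \<Sum>j\<in>UNIV. cnj (v $ i) * M $ i $ j * v $ j)"
  unfolding density_matrix_def by blast

lemma density_matrix_trace: "density_matrix M \<Longrightarrow> (\<Sum>i\<in>UNIV. M $ i $ i) = 1"
  unfolding density_matrix_def by blast

lemma density_matrix_diag_Im:
  assumes "density_matrix M"
  shows "Im (M $ i $ i) = 0"
  using arg_cong[OF density_matrix_hermitian[OF assms, of i i], of Im] by simp

lemma density_matrix_diag_real:
  assumes "density_matrix M"
  shows "M $ i $ i = of_real (Re (M $ i $ i))"
  using density_matrix_diag_Im[OF assms] by (simp add: complex_eq_iff)

lemma density_matrix_diag_nonneg:
  assumes "density_matrix M"
  shows "0 \<le> Re (M $ i $ i)"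
proof -
  let ?e = "axis i 1 :: complex ^ _"
  have "(\<Sum>k\<in>UNIV. \<Sum>l\<in>UNIV. cnj (?e $ k) * M $ k $ l * ?e $ l) = M $ i $ i"
    by (subst quadratic_form_restrict_support[where S = "{i}"]) (auto simp: axis_def)
  then show ?thesis
    using density_matrix_quadratic_form_nonneg[OF assms, of ?e] by simp
qed

lemma density_matrix_diag_le_one:
  assumes "density_matrix M"
  shows "Re (M $ i $ i) \<le> 1"
proof -
  have "Re (M $ i $ i) \<le> (\<Sum>k\<in>UNIV. Re (M $ k $ k))"
    using density_matrix_diag_nonneg[OF assms] by (intro member_le_sum) auto
  also have "\<dots> = 1"
    using density_matrix_trace[OF assms] by (metis Re_sum one_complex.sel(1))
  finally show ?thesis .
qed

lemma density_matrix_entry_bound: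
  assumes "density_matrix M"
  shows "(cmod (M $ i $ j))\<^sup>2 \<le> Re (M $ i $ i) * Re (M $ j $ j)"
proof (cases "i = j")
  case True
  have "cmod (M $ i $ i) = \<bar>Re (M $ i $ i)\<bar>"
    by (subst density_matrix_diag_real[OF assms]) (rule norm_of_real)
  then show ?thesis
    using True by (simp add: power2_eq_square)
next
  case False
  define m where "m = M $ i $ j"
  define a where "a = Re (M $ i $ i)"
  define b where "b = Re (M $ j $ j)"
  have Mii: "M $ i $ i = of_real a" and Mjj: "M $ j $ j = of_real b"
    unfolding a_def b_def by (rule density_matrix_diag_real[OF assms])+
  have Mji: "M $ j $ i = cnj m"
    unfolding m_def by (rule density_matrix_hermitian[OF assms])
  define q where "q = (cmod m)\<^sup>2"
  have norm_m: "of_real q = m * cnj m"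
    unfolding q_def by (rule complex_norm_square)
  have "0 \<le> a * t\<^sup>2 - 2 * q * t + q * b" for t
  proof -
    define v :: "complex ^ _" where "v = (\<chi> k. if k = i then of_real t else if k = j then - cnj m else 0)"
    have "(\<Sum>k\<in>UNIV. \<Sum>l\<in>UNIV. cnj (v $ k) * M $ k $ l * v $ l)
        = (\<Sum>k\<in>{i, j}. \<Sum>l\<in>{i, j}. cnj (v $ k) * M $ k $ l * v $ l)"
      by (rule quadratic_form_restrict_support) (simp add: v_def)
    also have "\<dots> = of_real (a * t\<^sup>2 - 2 * q * t + q * b)"
      using False by (simp add: v_def Mii Mjj Mji m_def[symmetric] norm_m power2_eq_square algebra_simps)
    finally show ?thesis
      using density_matrix_quadratic_form_nonneg[OF assms, of v] by simp
  qed
  then have "q * q \<le> q * (a * b)"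
    using density_matrix_diag_nonneg[OF assms] quadratic_nonneg_imp_discriminant_le[of a q "q * b"]
    unfolding a_def by (simp add: power2_eq_square algebra_simps)
  moreover have "0 \<le> a * b"
    using density_matrix_diag_nonneg[OF assms] unfolding a_def b_def by simp
  moreover have "0 \<le> q"
    unfolding q_def by simp
  ultimately have "q \<le> a * b"
    by (cases "q = 0") (simp_all add: mult_le_cancel_left_pos)
  then show ?thesis
    unfolding q_def m_def a_def b_def .
qed

lemma kron_sum_entry:
  "(\<Sum>i\<in>I. p i *\<^sub>R kron (M i) (N i)) $ (a, b) $ (c, d)
     = (\<Sum>i\<in>I. of_real (p i) * (M i $ a $ c * N i $ b $ d))"
  unfolding sum_component vector_scaleR_component kron_def vec_lambda_beta fst_conv snd_conv
  by (simp add: scaleR_conv_of_real)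

lemma separable_entry_bound:
  fixes \<rho> :: "complex ^ ('m::finite \<times> 'n::finite) ^ ('m \<times> 'n)"
  assumes "separable \<rho>"
  shows "(cmod (\<rho> $ (w, x) $ (y, z)))\<^sup>2 \<le> Re (\<rho> $ (w, z) $ (w, z)) * Re (\<rho> $ (y, x) $ (y, x))"
proof -
  obtain k p and M :: "nat \<Rightarrow> complex ^ 'm ^ 'm" and N :: "nat \<Rightarrow> complex ^ 'n ^ 'n"
    where states: "\<And>i. i < k \<Longrightarrow> 0 \<le> p i \<and> density_matrix (M i) \<and> density_matrix (N i)"
      and \<rho>_eq: "\<rho> = (\<Sum>i<k. p i *\<^sub>R kron (M i) (N i))"
    using assms unfolding separable_def by blast
  have diag: "Re (\<rho> $ (a, b) $ (a, b)) = (\<Sum>i<k. p i * Re (M i $ a $ a) * Re (N i $ b $ b))" for a b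
  proof -
    have "Re (of_real (p i) * (M i $ a $ a * N i $ b $ b)) = p i * Re (M i $ a $ a) * Re (N i $ b $ b)"
      if "i < k" for i
      using states[OF that] by (simp add: density_matrix_diag_Im)
    then show ?thesis
      unfolding \<rho>_eq kron_sum_entry Re_sum by (intro sum.cong) auto
  qed
  have "(cmod (\<Sum>i<k. of_real (p i) * (M i $ w $ y * N i $ x $ z)))\<^sup>2
      \<le> (\<Sum>i<k. p i * Re (M i $ w $ w) * Re (N i $ z $ z)) * (\<Sum>i<k. p i * Re (M i $ y $ y) * Re (N i $ x $ x))"
  proof (rule norm_sum_power2_le_sum_mult)
    fix i assume "i \<in> {..<k}"
    then have factor: "0 \<le> p i" "density_matrix (M i)" "density_matrix (N i)"
      using states by auto
    have "(cmod (of_real (p i) * (M i $ w $ y * N i $ x $ z)))\<^sup>2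
        = (p i)\<^sup>2 * (cmod (M i $ w $ y))\<^sup>2 * (cmod (N i $ x $ z))\<^sup>2"
      using factor by (simp add: norm_mult power_mult_distrib)
    also have "\<dots> \<le> (p i)\<^sup>2 * (Re (M i $ w $ w) * Re (M i $ y $ y)) * (Re (N i $ x $ x) * Re (N i $ z $ z))"
      using factor by (intro mult_mono mult_left_mono density_matrix_entry_bound)
        (auto intro!: mult_nonneg_nonneg density_matrix_diag_nonneg)
    finally show "(cmod (of_real (p i) * (M i $ w $ y * N i $ x $ z)))\<^sup>2
        \<le> p i * Re (M i $ w $ w) * Re (N i $ z $ z) * (p i * Re (M i $ y $ y) * Re (N i $ x $ x))"
      by (simp add: power2_eq_square ac_simps)
  qed (use states in \<open>auto intro!: mult_nonneg_nonneg density_matrix_diag_nonneg\<close>)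
  then show ?thesis
    unfolding diag unfolding \<rho>_eq kron_sum_entry .
qed

theorem lemma4p3:
  fixes \<rho> :: "complex ^ ('m::finite \<times> 'n::finite) ^ ('m \<times> 'n)"
    and w y :: 'm and x z :: 'n
  assumes "density_matrix \<rho>" and "separable \<rho>"
  shows "cmod (\<rho> $ (w, x) $ (y, z)) \<le>
           sqrt (min (min (Re (\<rho> $ (w, x) $ (w, x))) (Re (\<rho> $ (w, z) $ (w, z))))
                     (min (Re (\<rho> $ (y, x) $ (y, x))) (Re (\<rho> $ (y, z) $ (y, z))))) \<and>
         cmod (\<rho> $ (w, x) $ (y, z)) \<le>
           (1/2) * min (Re (\<rho> $ (w, x) $ (w, x)) + Re (\<rho> $ (y, z) $ (y, z)))
                       (Re (\<rho> $ (w, z) $ (w, z)) + Re (\<rho> $ (y, x) $ (y, x)))"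
proof -
  let ?c = "cmod (\<rho> $ (w, x) $ (y, z))"
  let ?d = "\<lambda>u. Re (\<rho> $ u $ u)"
  have diag: "0 \<le> ?d u" "?d u \<le> 1" for u
    using assms(1) by (rule density_matrix_diag_nonneg, rule density_matrix_diag_le_one)
  have direct: "?c\<^sup>2 \<le> ?d (w, x) * ?d (y, z)"
    using assms(1) by (rule density_matrix_entry_bound)
  have crossed: "?c\<^sup>2 \<le> ?d (w, z) * ?d (y, x)"
    using assms(2) by (rule separable_entry_bound)
  have "?c\<^sup>2 \<le> min (min (?d (w, x)) (?d (w, z))) (min (?d (y, x)) (?d (y, z)))"
    using power2_le_min_of_le_mult[OF direct] power2_le_min_of_le_mult[OF crossed] diag by simp
  then have "?c \<le> sqrt (min (min (?d (w, x)) (?d (w, z))) (min (?d (y, x)) (?d (y, z))))"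
    by (rule real_le_rsqrt)
  moreover have "?c \<le> (?d (w, x) + ?d (y, z)) / 2" "?c \<le> (?d (w, z) + ?d (y, x)) / 2"
    using le_arith_mean_of_power2_le_mult[OF direct] le_arith_mean_of_power2_le_mult[OF crossed] diag
    by auto
  ultimately show ?thesis
    by simp
qed

end
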